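(* Let $H=(V,E)$ be an $n$-uniform hypergraph, $r\ge 2$, and $k\ge 1$. The number of sequences $(C_1,\dots,C_k)$ of edges of $H$ for which there exist an injective $\sigma:V\to[0,1)$ and a color $i\in\{k,\dots,r\}$ such that $(C_1,\dots,C_k)$ is an ordered $k$-chain for color $i$ is at most $2\binom{|E|}{k}$.
   Context: Setting: $n\ge 3$, $r\ge2$ integers, $H=(V,E)$ an $n$-uniform hypergraph, colors $\{1,\dots,r\}$. Put $p=\frac{r-1}{r}\cdot\frac{\ln(n/\ln n)}{n}$. Partition $[0,1)$ into consecutive half-open intervals $\Delta_1,\delta_1,\Delta_2,\delta_2,\dots,\delta_{r-1},\Delta_r$ (left to right), $\Delta_i=\big[(i-1)(\tfrac{1-p}{r}+\tfrac{p}{r-1}),\ i\tfrac{1-p}{r}+(i-1)\tfrac{p}{r-1}\big)$, $\delta_i=\big[i\tfrac{1-p}{r}+(i-1)\tfrac{p}{r-1},\ i(\tfrac{1-p}{r}+\tfrac{p}{r-1})\big)$. For injective $\sigma:V\to[0,1)$, a vertex $v$ belongs to interval $I$ if $\sigma(v)\in I$; the first (last) vertex of a vertex set is its vertex of smallest (largest) weight. Algorithm 1: every vertex in $\Delta_i$ gets color $i$; then vertices in $\bigcup_i\delta_i$ are processed in increasing weight order, and $v\in\delta_i$ gets color $i$ unless some edge containing $v$ has all its other vertices already colored $i$, in which case $v$ gets color $i+1$; the result is $C^0$. For $1\le k\le i\le r$, a sequence $(C_1,\dots,C_k)$ of edges is an ordered $k$-chain for color $i$ if: (a) the first vertex of $C_1$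 lies in $\Delta_{i-k+1}$; (b) for each $j=1,\dots,k-1$, the last vertex of $C_j$ equals the first vertex of $C_{j+1}$, lies in $\delta_{i-k+j}$, and all vertices of $C_j$ other than its last vertex have color $i-k+j$ in $C^0$; (c) all vertices of $C_k$ have color $i$ in $C^0$. *)

theory Defs
  imports Complex_Main
begin

definition pval :: "nat \<Rightarrow> nat \<Rightarrow> real" where
  "pval n r = (real r - 1) / real r * (ln (real n / ln (real n)) / real n)"

definition BigDelta :: "nat \<Rightarrow> nat \<Rightarrow> nat \<Rightarrow> real set" where
  "BigDelta n r i = (let p = pval n r in
     {(real i - 1) * ((1 - p) / real r + p / (real r - 1)) ..<
      real i * ((1 - p) / real r) + (real i - 1) * (p / (real r - 1))})"

definition SmallDelta :: "nat \<Rightarrow> nat \<Rightarrow> nat \<Rightarrow> real set" where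
  "SmallDelta n r i = (let p = pval n r in
     {real i * ((1 - p) / real r) + (real i - 1) * (p / (real r - 1)) ..<
      real i * ((1 - p) / real r + p / (real r - 1))})"

definition first_vx :: "('a \<Rightarrow> real) \<Rightarrow> 'a set \<Rightarrow> 'a" where
  "first_vx \<sigma> e = (THE v. v \<in> e \<and> (\<forall>u\<in>e. \<sigma> v \<le> \<sigma> u))"

definition last_vx :: "('a \<Rightarrow> real) \<Rightarrow> 'a set \<Rightarrow> 'a" where
  "last_vx \<sigma> e = (THE v. v \<in> e \<and> (\<forall>u\<in>e. \<sigma> u \<le> \<sigma> v))"

text \<open>Algorithm 1. Colours are 1..r; 0 means "not (yet) coloured".
  Step 1: every vertex in Delta_i gets colour i.\<close>
definition init_col :: "nat \<Rightarrow> nat \<Rightarrow> 'a set \<Rightarrow> ('a \<Rightarrow> real) \<Rightarrow> 'a \<Rightarrow> nat" where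
  "init_col n r V \<sigma> v =
     (if v \<in> V \<and> (\<exists>i\<in>{1..r}. \<sigma> v \<in> BigDelta n r i)
      then (THE i. i \<in> {1..r} \<and> \<sigma> v \<in> BigDelta n r i) else 0)"

definition alg_step :: "nat \<Rightarrow> nat \<Rightarrow> 'a set set \<Rightarrow> ('a \<Rightarrow> real)
    \<Rightarrow> ('a \<Rightarrow> nat) \<Rightarrow> 'a \<Rightarrow> ('a \<Rightarrow> nat)" where
  "alg_step n r E \<sigma> c v =
     (let i = (THE i. i \<in> {1..r-1} \<and> \<sigma> v \<in> SmallDelta n r i) in
      c(v := (if \<exists>e\<in>E. v \<in> e \<and> (\<forall>u\<in>e - {v}. c u = i) then i + 1 else i)))"

definition C0 :: "nat \<Rightarrow> nat \<Rightarrow> 'a set \<Rightarrow> 'a set set \<Rightarrow> ('a \<Rightarrow> real) \<Rightarrow> 'a \<Rightarrow> nat" where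
  "C0 n r V E \<sigma> =
     foldl (alg_step n r E \<sigma>) (init_col n r V \<sigma>)
       (filter (\<lambda>v. \<exists>i\<in>{1..r-1}. \<sigma> v \<in> SmallDelta n r i)
          (sorted_key_list_of_set \<sigma> V))"

text \<open>Ordered k-chain for colour i; the list Cs = [C_1,...,C_k] (0-based indices).\<close>
definition ordered_chain ::
  "nat \<Rightarrow> nat \<Rightarrow> 'a set \<Rightarrow> 'a set set \<Rightarrow> ('a \<Rightarrow> real) \<Rightarrow> nat \<Rightarrow> nat \<Rightarrow> 'a set list \<Rightarrow> bool" where
  "ordered_chain n r V E \<sigma> k i Cs \<longleftrightarrow>
     1 \<le> k \<and> k \<le> i \<and> i \<le> r \<and> length Cs = k \<and> set Cs \<subseteq> E \<and>
     \<sigma> (first_vx \<sigma> (Cs ! 0)) \<in> BigDelta n r (i - k + 1) \<and>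
     (\<forall>j. 1 \<le> j \<and> j \<le> k - 1 \<longrightarrow>
        last_vx \<sigma> (Cs ! (j - 1)) = first_vx \<sigma> (Cs ! j) \<and>
        \<sigma> (last_vx \<sigma> (Cs ! (j - 1))) \<in> SmallDelta n r (i - k + j) \<and>
        (\<forall>v \<in> Cs ! (j - 1) - {last_vx \<sigma> (Cs ! (j - 1))}.
            C0 n r V E \<sigma> v = i - k + j)) \<and>
     (\<forall>v \<in> Cs ! (k - 1). C0 n r V E \<sigma> v = i)"

end

theory Submission
  imports Defs "HOL-Combinatorics.Permutations"
begin

text \<open>In an ordered chain every vertex of \<open>C\<^sub>j\<close> except its last one has colour \<open>i - k + j\<close>
  in \<open>C\<^sup>0\<close>, and for \<open>j < k\<close> the last one, being the first vertex of \<open>C\<^bsub>j+1\<^esub>\<close>, has colour \<open>i - k + j + 1\<close>.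
  Hence edges at distance at least two in the chain are disjoint, while consecutive edges meet:
  the chain is an induced path in the intersection graph of \<open>E\<close>. An induced path is
  determined up to reversal by its set of vertices, so every \<open>k\<close>-set of edges carries at most
  two chains.\<close>

lemma unit_step_injection_cases:
  fixes p :: "nat \<Rightarrow> nat"
  assumes inj: "inj_on p {..<k}" and range: "\<And>a. a < k \<Longrightarrow> p a < k"
    and step: "\<And>a. Suc a < k \<Longrightarrow> p (Suc a) = Suc (p a) \<or> p a = Suc (p (Suc a))"
  shows "(\<forall>a<k. p a = a) \<or> (\<forall>a<k. p a = k - 1 - a)"
proof -
  \<comment> \<open>injectivity forbids \<open>p (a + 2) = p a\<close>, so the steps never change sign\<close>
  have same_direction: "p (Suc (Suc a)) = Suc (p (Suc a)) \<longleftrightarrow> p (Suc a) = Suc (p a)"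
    if "Suc (Suc a) < k" for a
  proof -
    have "p (Suc (Suc a)) \<noteq> p a"
      using inj_onD[OF inj, of "Suc (Suc a)" a] that by auto
    then show ?thesis using step[of a] step[of "Suc a"] that by linarith
  qed
  have up: "p a = p 0 + a" if "p 1 = Suc (p 0)" "a < k" for a
  proof -
    have "p (Suc b) = Suc (p b)" if "Suc b < k" for b
      using that
    proof (induction b)
      case (Suc b)
      then show ?case using same_direction[of b] by simp
    qed (use \<open>p 1 = Suc (p 0)\<close> in simp)
    then show ?thesis using \<open>a < k\<close> by (induction a) auto
  qed
  have down: "p 0 = p a + a" if "p 0 = Suc (p 1)" "a < k" for a
  proof -
    have "p b = Suc (p (Suc b))" if "Suc b < k" for b
      using that
    proof (induction b)
      case (Suc b)
      then show ?case using same_direction[of b] step[of "Suc b"] by auto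
    qed (use \<open>p 0 = Suc (p 1)\<close> in simp)
    then show ?thesis using \<open>a < k\<close> by (induction a) auto
  qed
  consider "k \<le> 1" | "p 1 = Suc (p 0)" "2 \<le> k" | "p 0 = Suc (p 1)" "2 \<le> k"
    using step[of 0] by fastforce
  then show ?thesis
  proof cases
    case 1
    then have "\<forall>a<k. p a = a" using range[of 0] by (cases k) auto
    then show ?thesis ..
  next
    case 2
    then have "p 0 = 0" using up[of "k - 1"] range[of "k - 1"] by simp
    then have "p a = a" if "a < k" for a
      using up[OF 2(1) that] by simp
    then show ?thesis by simp
  next
    case 3
    then have "p 0 = k - 1" using down[of "k - 1"] range[of 0] by simp
    then have "p a = k - 1 - a" if "a < k" for a
      using down[OF 3(1) that] by simp
    then show ?thesis by simp
  qed
qed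

definition induced_path :: "('b \<Rightarrow> 'b \<Rightarrow> bool) \<Rightarrow> 'b list \<Rightarrow> bool" where
  "induced_path R xs \<longleftrightarrow> distinct xs \<and>
     (\<forall>a. Suc a < length xs \<longrightarrow> R (xs ! a) (xs ! Suc a)) \<and>
     (\<forall>a b. a < length xs \<longrightarrow> b < length xs \<longrightarrow> R (xs ! a) (xs ! b) \<longrightarrow> a \<le> Suc b \<and> b \<le> Suc a)"

lemma induced_path_unique:
  assumes xs: "induced_path R xs" and ys: "induced_path R ys" and "set xs = set ys"
  shows "ys = xs \<or> ys = rev xs"
proof -
  have "distinct xs" "distinct ys"
    using xs ys by (simp_all add: induced_path_def)
  then have "mset ys = mset xs"
    using set_eq_iff_mset_eq_distinct[of ys xs] assms(3) by simp
  then obtain p where p: "p permutes {..<length xs}" and ys_eq: "permute_list p xs = ys"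
    by (rule mset_eq_permutation)
  define k where "k = length xs"
  have len: "length ys = k"
    using mset_eq_length[OF \<open>mset ys = mset xs\<close>] k_def by simp
  have ys_nth: "ys ! a = xs ! p a" if "a < k" for a
    using permute_list_nth[OF p, of a] that ys_eq k_def by simp
  have range: "p a < k" if "a < k" for a
    using permutes_in_image[OF p] that k_def by simp
  have "p (Suc a) = Suc (p a) \<or> p a = Suc (p (Suc a))" if "Suc a < k" for a
  proof -
    have "R (ys ! a) (ys ! Suc a)"
      using ys that len by (simp add: induced_path_def)
    then have "R (xs ! p a) (xs ! p (Suc a))"
      using ys_nth[of a] ys_nth[of "Suc a"] that by simp
    then have "p a \<le> Suc (p (Suc a)) \<and> p (Suc a) \<le> Suc (p a)"
      using xs range[of a] range[of "Suc a"] that k_def by (simp add: induced_path_def)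
    moreover have "p a \<noteq> p (Suc a)"
      using permutes_inj[OF p] by (auto dest: injD)
    ultimately show ?thesis by linarith
  qed
  then have "(\<forall>a<k. p a = a) \<or> (\<forall>a<k. p a = k - 1 - a)"
    using unit_step_injection_cases[of p k] range permutes_inj_on[OF p] by blast
  then show ?thesis
    using ys_nth len k_def by (auto intro!: nth_equalityI simp: rev_nth)
qed

lemma card_le_mult_card_image:
  assumes "finite A" and "\<And>b. b \<in> f ` A \<Longrightarrow> card {a \<in> A. f a = b} \<le> m"
  shows "card A \<le> m * card (f ` A)"
proof -
  have "A = (\<Union>b\<in>f ` A. {a \<in> A. f a = b})" by auto
  then have "card A \<le> (\<Sum>b\<in>f ` A. card {a \<in> A. f a = b})"
    by (metis card_UN_le assms(1) finite_imageI)
  also have "\<dots> \<le> (\<Sum>b\<in>f ` A. m)" by (rule sum_mono) (rule assms(2))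
  finally show ?thesis by (simp add: mult.commute)
qed

lemma card_induced_paths_le:
  assumes "finite S"
  shows "card {xs. length xs = k \<and> set xs \<subseteq> S \<and> induced_path R xs} \<le> 2 * (card S choose k)"
    (is "card ?P \<le> _")
proof -
  have "finite ?P"
    by (rule rev_finite_subset[OF finite_lists_length_eq[OF assms, of k]]) auto
  then have "card ?P \<le> 2 * card (set ` ?P)"
  proof (rule card_le_mult_card_image)
    fix T assume "T \<in> set ` ?P"
    then obtain xs where xs: "xs \<in> ?P" "T = set xs" by blast
    have "{ys \<in> ?P. set ys = T} \<subseteq> {xs, rev xs}"
      using xs induced_path_unique[of R xs] by auto
    then have "card {ys \<in> ?P. set ys = T} \<le> card {xs, rev xs}"
      by (rule card_mono[rotated]) simp
    also have "\<dots> \<le> 2"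
      by (simp add: card_insert_if)
    finally show "card {ys \<in> ?P. set ys = T} \<le> 2" .
  qed
  also have "card (set ` ?P) \<le> card {T. T \<subseteq> S \<and> card T = k}"
    using assms by (intro card_mono) (auto simp: induced_path_def distinct_card)
  also have "\<dots> = card S choose k"
    using assms by (rule n_subsets)
  finally show ?thesis by simp
qed

lemma first_vx_least:
  assumes "finite e" "e \<noteq> {}" "inj_on \<sigma> e"
  shows "first_vx \<sigma> e \<in> e \<and> (\<forall>u\<in>e. \<sigma> (first_vx \<sigma> e) \<le> \<sigma> u)"
  unfolding first_vx_def
proof (rule theI')
  have "Min (\<sigma> ` e) \<in> \<sigma> ` e"
    using assms(1,2) by simp
  then obtain v where "v \<in> e" "\<sigma> v = Min (\<sigma> ` e)"
    by (metis imageE)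
  then have "v \<in> e \<and> (\<forall>u\<in>e. \<sigma> v \<le> \<sigma> u)"
    using assms(1) by simp
  moreover have "w = v" if "w \<in> e \<and> (\<forall>u\<in>e. \<sigma> w \<le> \<sigma> u)" for w
    using that calculation inj_onD[OF assms(3), of w v] by force
  ultimately show "\<exists>!v. v \<in> e \<and> (\<forall>u\<in>e. \<sigma> v \<le> \<sigma> u)" by blast
qed

lemma last_vx_eq_first_vx_uminus: "last_vx \<sigma> e = first_vx (\<lambda>v. - \<sigma> v) e"
  by (simp add: first_vx_def last_vx_def)

lemma last_vx_greatest:
  assumes "finite e" "e \<noteq> {}" "inj_on \<sigma> e"
  shows "last_vx \<sigma> e \<in> e \<and> (\<forall>u\<in>e. \<sigma> u \<le> \<sigma> (last_vx \<sigma> e))"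
proof -
  have "inj_on (\<lambda>v. - \<sigma> v) e"
    using assms(3) by (simp add: inj_on_def)
  from first_vx_least[OF assms(1,2) this] show ?thesis by (simp add: last_vx_eq_first_vx_uminus)
qed

lemma first_vx_neq_last_vx:
  assumes "finite e" "2 \<le> card e" "inj_on \<sigma> e"
  shows "first_vx \<sigma> e \<noteq> last_vx \<sigma> e"
proof
  assume same: "first_vx \<sigma> e = last_vx \<sigma> e"
  have "e \<noteq> {}" using assms(2) by auto
  then have "\<sigma> u = \<sigma> (first_vx \<sigma> e)" if "u \<in> e" for u
    using first_vx_least[OF assms(1) _ assms(3)] last_vx_greatest[OF assms(1) _ assms(3)] same that
    by (metis order.antisym)
  then have "e \<subseteq> {first_vx \<sigma> e}"
    using inj_onD[OF assms(3)] first_vx_least[OF assms(1) \<open>e \<noteq> {}\<close> assms(3)] by blast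
  then have "card e \<le> 1"
    using card_mono[of "{first_vx \<sigma> e}" e] by simp
  with assms(2) show False by simp
qed

lemma ordered_chain_nth_in:
  "ordered_chain n r V E \<sigma> k i Cs \<Longrightarrow> t < k \<Longrightarrow> Cs ! t \<in> E"
  unfolding ordered_chain_def by auto

lemma ordered_chain_link:
  assumes "ordered_chain n r V E \<sigma> k i Cs" "Suc t < k"
  shows "last_vx \<sigma> (Cs ! t) = first_vx \<sigma> (Cs ! Suc t)"
  using assms unfolding ordered_chain_def
  by (auto dest!: spec[of _ "Suc t"])

lemma ordered_chain_colour_last:
  "ordered_chain n r V E \<sigma> k i Cs \<Longrightarrow> v \<in> Cs ! (k - 1) \<Longrightarrow> C0 n r V E \<sigma> v = i"
  unfolding ordered_chain_def by blast

lemma ordered_chain_colour_nonlast: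
  assumes oc: "ordered_chain n r V E \<sigma> k i Cs" and "t < k"
    and "v \<in> Cs ! t" "v \<noteq> last_vx \<sigma> (Cs ! t)"
  shows "C0 n r V E \<sigma> v = i - k + Suc t"
proof (cases "Suc t < k")
  case True
  then show ?thesis
    using oc assms(3,4) unfolding ordered_chain_def
    by (auto dest!: spec[of _ "Suc t"])
next
  case False
  then have "t = k - 1" "0 < k" "k \<le> i"
    using \<open>t < k\<close> oc unfolding ordered_chain_def by auto
  then show ?thesis
    using ordered_chain_colour_last[OF oc] assms(3) by simp
qed

context
  fixes n r :: nat and V :: "'a set" and E :: "'a set set" and \<sigma> :: "'a \<Rightarrow> real"
  assumes uniform: "\<forall>e\<in>E. e \<subseteq> V \<and> card e = n" and n_ge_2: "2 \<le> n"
    and finite_V: "finite V" and inj_\<sigma>: "inj_on \<sigma> V"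
begin

lemma edge_first_last_vx:
  assumes "e \<in> E"
  shows "first_vx \<sigma> e \<in> e" "last_vx \<sigma> e \<in> e" "first_vx \<sigma> e \<noteq> last_vx \<sigma> e"
proof -
  have e: "finite e" "2 \<le> card e" "inj_on \<sigma> e"
    using assms uniform n_ge_2 finite_V inj_\<sigma> by (auto intro: finite_subset inj_on_subset)
  then have "e \<noteq> {}" by auto
  with e show "first_vx \<sigma> e \<in> e" "last_vx \<sigma> e \<in> e" "first_vx \<sigma> e \<noteq> last_vx \<sigma> e"
    by (simp_all add: first_vx_least last_vx_greatest first_vx_neq_last_vx)
qed

lemma ordered_chain_colour:
  assumes oc: "ordered_chain n r V E \<sigma> k i Cs" and "t < k" and "v \<in> Cs ! t"
  shows "C0 n r V E \<sigma> v = i - k + Suc t \<or> C0 n r V E \<sigma> v = i - k + Suc (Suc t)"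
proof (cases "v = last_vx \<sigma> (Cs ! t) \<and> Suc t < k")
  case True
  then have "v = first_vx \<sigma> (Cs ! Suc t)"
    using ordered_chain_link[OF oc] by simp
  then have "v \<in> Cs ! Suc t" "v \<noteq> last_vx \<sigma> (Cs ! Suc t)"
    using edge_first_last_vx ordered_chain_nth_in[OF oc] True by auto
  then show ?thesis
    using ordered_chain_colour_nonlast[OF oc] True by blast
next
  case False
  then consider "v \<noteq> last_vx \<sigma> (Cs ! t)" | "t = k - 1"
    using \<open>t < k\<close> by fastforce
  then show ?thesis
  proof cases
    case 1
    then show ?thesis using ordered_chain_colour_nonlast[OF oc \<open>t < k\<close> \<open>v \<in> Cs ! t\<close>] by simp
  next
    case 2
    moreover have "k \<le> i" using oc unfolding ordered_chain_def by simp
    moreover have "0 < k" using \<open>t < k\<close> by simp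
    ultimately show ?thesis
      using ordered_chain_colour_last[OF oc] \<open>v \<in> Cs ! t\<close> by simp
  qed
qed

lemma ordered_chain_disjoint:
  assumes oc: "ordered_chain n r V E \<sigma> k i Cs" and "b < k" and "Suc a < b"
  shows "Cs ! a \<inter> Cs ! b = {}"
proof (rule ccontr)
  assume "Cs ! a \<inter> Cs ! b \<noteq> {}"
  then obtain v where "v \<in> Cs ! a" "v \<in> Cs ! b" by blast
  moreover have "k \<le> i" "a < k" using oc assms(2,3) unfolding ordered_chain_def by auto
  ultimately show False
    using ordered_chain_colour[OF oc, of a v] ordered_chain_colour[OF oc, of b v] assms(2,3)
    by linarith
qed

lemma ordered_chain_induced_path:
  assumes oc: "ordered_chain n r V E \<sigma> k i Cs"
  shows "induced_path (\<lambda>A B. A \<inter> B \<noteq> {}) Cs"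
proof -
  have len: "length Cs = k" using oc unfolding ordered_chain_def by simp
  have ends: "first_vx \<sigma> (Cs ! t) \<in> Cs ! t" "last_vx \<sigma> (Cs ! t) \<in> Cs ! t"
      "first_vx \<sigma> (Cs ! t) \<noteq> last_vx \<sigma> (Cs ! t)" if "t < k" for t
    using edge_first_last_vx ordered_chain_nth_in[OF oc that] by blast+
  have adjacent: "Cs ! a \<inter> Cs ! Suc a \<noteq> {}" if "Suc a < k" for a
    using ends[of a] ends[of "Suc a"] ordered_chain_link[OF oc that] that by auto
  have "Cs ! a \<noteq> Cs ! b" if "a < b" "b < k" for a b
  proof (cases "b = Suc a")
    case True
    then show ?thesis
      using ends[of a] ordered_chain_link[OF oc] that by auto
  next
    case False
    then have "Cs ! a \<inter> Cs ! b = {}"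
      using ordered_chain_disjoint[OF oc \<open>b < k\<close>] that by simp
    then show ?thesis
      using ends[of b] that by auto
  qed
  then have "distinct Cs"
    unfolding distinct_conv_nth len by (metis nat_neq_iff)
  moreover have "a \<le> Suc b \<and> b \<le> Suc a" if "a < k" "b < k" "Cs ! a \<inter> Cs ! b \<noteq> {}" for a b
  proof (rule ccontr)
    assume "\<not> (a \<le> Suc b \<and> b \<le> Suc a)"
    then have "Suc a < b \<or> Suc b < a" by linarith
    then show False
      using ordered_chain_disjoint[OF oc, of b a] ordered_chain_disjoint[OF oc, of a b] that
      by (auto simp: Int_commute)
  qed
  ultimately show ?thesis
    unfolding induced_path_def len using adjacent by blast
qed

end

theorem lemma1:
  fixes V :: "'a set" and E :: "'a set set" and n r k :: nat
  assumes "n \<ge> 3" and "r \<ge> 2" and "k \<ge> 1"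
    and "finite V" and "\<forall>e\<in>E. e \<subseteq> V \<and> card e = n"
  shows "card {Cs. length Cs = k \<and> set Cs \<subseteq> E \<and>
            (\<exists>\<sigma> :: 'a \<Rightarrow> real. inj_on \<sigma> V \<and> \<sigma> ` V \<subseteq> {0..<1} \<and>
               (\<exists>i\<in>{k..r}. ordered_chain n r V E \<sigma> k i Cs))}
         \<le> 2 * (card E choose k)"
proof -
  let "card ?chains \<le> _" = ?thesis
  let ?paths = "{Cs. length Cs = k \<and> set Cs \<subseteq> E \<and> induced_path (\<lambda>A B. A \<inter> B \<noteq> {}) Cs}"
  have "finite E"
    using assms(4,5) by (meson PowI finite_Pow_iff finite_subset subsetI)
  have "?chains \<subseteq> ?paths"
    using ordered_chain_induced_path[OF assms(5) _ assms(4)] assms(1) by fastforce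
  moreover have "finite ?paths"
    by (rule rev_finite_subset[OF finite_lists_length_eq[OF \<open>finite E\<close>, of k]]) auto
  ultimately have "card ?chains \<le> card ?paths"
    by (intro card_mono)
  also have "\<dots> \<le> 2 * (card E choose k)"
    using \<open>finite E\<close> by (rule card_induced_paths_le)
  finally show ?thesis .
qed

end
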